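(* Let $\lambda\in\mathbb Z^n\setminus\{0\}$ have coprime coefficients and let $N\subseteq\mathcal N(\lambda)$ be a set of rank $n-1$. Then: (a) a polynomial $p\in\mathbb Z[X_1,\dots,X_n]$ satisfies $p(\gamma)=0$ for all $\gamma\in N$ if and only if $\mathbf X^{\lambda^+}-\mathbf X^{\lambda^-}$ divides $p$; (b) $\mathbf X^{\lambda^+}-\mathbf X^{\lambda^-}$ is irreducible in $\mathbb Z[X_1,\dots,X_n]$.
   Context: For $\alpha\in\mathbb N_0^n$, $\mathbf X^\alpha=\prod_iX_i^{(\alpha)_i}$. For $\gamma\in\mathbb Z^n$ and $p\in\mathbb Z[X_1,\dots,X_n]$, $p(\gamma)\in\mathbb Q(x)$ denotes the image of $p$ under the ring homomorphism $X_i\mapsto x^{(\gamma)_i}$. For $\lambda\in\mathbb Z^n$, $\lambda^+,\lambda^-$ are the unique vectors in $\mathbb N_0^n$ with $\lambda=\lambda^+-\lambda^-$ and $\lambda^+\cdot\lambda^-=0$. $\lambda$ has coprime coefficients if the gcd of its coordinates is $1$. $\mathcal N(\lambda)=\{\alpha\in\mathbb Z^n:\lambda\cdot\alpha=0\}$. For $M\subseteq\mathbb Q^n$, $M\mathbb Q$ denotes the $\mathbb Q$-subspace spanned by $M$; $M$ has rank $r$ if $\dim M\mathbb Q=r$ and $M$ is not covered by any finite union of subspaces of $M\mathbb Q$ of dimension $r-1$. *)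

theory Defs
  imports Main "HOL-Library.Poly_Mapping" "HOL-Library.Function_Algebras" "HOL-Computational_Algebra.Factorial_Ring"
    "HOL-Computational_Algebra.Fraction_Field" "HOL-Computational_Algebra.Polynomial"
begin

text \<open>Integer polynomials in the variables X_v, v ranging over a finite type 'v
  (so n = CARD('v)): the monoid ring Z[N_0^'v], i.e. finitely supported maps
  from exponent vectors to integer coefficients, with convolution product.\<close>
type_synonym 'v intpoly = "('v \<Rightarrow>\<^sub>0 nat) \<Rightarrow>\<^sub>0 int"

definition mono_X :: "('v \<Rightarrow>\<^sub>0 nat) \<Rightarrow> 'v intpoly" where
  "mono_X \<alpha> = Poly_Mapping.single \<alpha> 1"

text \<open>lambda^+ and lambda^- (for finite 'v the supports are finite).\<close>
definition pos_part :: "('v::finite \<Rightarrow> int) \<Rightarrow> ('v \<Rightarrow>\<^sub>0 nat)" where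
  "pos_part l = Abs_poly_mapping (\<lambda>i. nat (l i))"
definition neg_part :: "('v::finite \<Rightarrow> int) \<Rightarrow> ('v \<Rightarrow>\<^sub>0 nat)" where
  "neg_part l = Abs_poly_mapping (\<lambda>i. nat (- l i))"

definition binom_poly :: "('v::finite \<Rightarrow> int) \<Rightarrow> 'v intpoly" where
  "binom_poly l = mono_X (pos_part l) - mono_X (neg_part l)"

type_synonym ratfun = "rat poly fract"
definition xvar :: ratfun where "xvar = Fraction_Field.Fract [:0, 1:] 1"

text \<open>p(gamma): image of p under the ring homomorphism X_i \<mapsto> x^(gamma_i).\<close>
definition eval_at :: "('v::finite \<Rightarrow> int) \<Rightarrow> 'v intpoly \<Rightarrow> ratfun" where
  "eval_at \<gamma> p = (\<Sum>\<alpha>\<in>Poly_Mapping.keys p.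
      of_int (Poly_Mapping.lookup p \<alpha>) * (\<Prod>i\<in>UNIV. xvar powi (\<gamma> i * int (Poly_Mapping.lookup \<alpha> i))))"

definition coprime_coeffs :: "('v \<Rightarrow> int) \<Rightarrow> bool" where
  "coprime_coeffs l \<longleftrightarrow> Gcd (range l) = 1"

definition null_lattice :: "('v::finite \<Rightarrow> int) \<Rightarrow> ('v \<Rightarrow> int) set" where
  "null_lattice l = {\<alpha>. (\<Sum>i\<in>UNIV. l i * \<alpha> i) = 0}"

definition qscale :: "rat \<Rightarrow> ('v \<Rightarrow> rat) \<Rightarrow> ('v \<Rightarrow> rat)" where
  "qscale c f = (\<lambda>i. c * f i)"

definition qspan :: "('v \<Rightarrow> rat) set \<Rightarrow> ('v \<Rightarrow> rat) set" where
  "qspan M = module.span qscale M"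
definition qsubspace :: "('v \<Rightarrow> rat) set \<Rightarrow> bool" where
  "qsubspace U = module.subspace qscale U"
definition qdim :: "('v \<Rightarrow> rat) set \<Rightarrow> nat" where
  "qdim U = vector_space.dim qscale U"

text \<open>M has rank r: dim (M Q) = r and M is not covered by any finite union of
  subspaces of M Q of dimension r - 1 (computed in the integers, so for r = 0
  there are no such subspaces).\<close>
definition has_rank :: "('v \<Rightarrow> rat) set \<Rightarrow> nat \<Rightarrow> bool" where
  "has_rank M r \<longleftrightarrow> qdim (qspan M) = r \<and>
     \<not> (\<exists>F. finite F \<and> (\<forall>U\<in>F. qsubspace U \<and> U \<subseteq> qspan M \<and> int (qdim U) = int r - 1)
            \<and> M \<subseteq> \<Union>F)"

definition rat_vecs :: "('v \<Rightarrow> int) set \<Rightarrow> ('v \<Rightarrow> rat) set" where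
  "rat_vecs N = (\<lambda>\<alpha>. (\<lambda>i. of_int (\<alpha> i))) ` N"

end

theory Submission
  imports Defs "HOL-Computational_Algebra.Polynomial_Factorial"
begin

(* Lemma 3.8: for primitive l and a rank-(n-1) set N orthogonal to l, the polynomials
   vanishing on N are the multiples of B = X^(l+) - X^(l-), and B is irreducible.
   (1) Linear algebra [rank_avoidance]: N is not covered by finitely many hyperplanes
       d^perp with d not proportional to l, since each cuts the (n-1)-dimensional span
       of N in dimension n-2.
   (2) Evaluation at gamma is a ring homomorphism into Q(x) killing B on l^perp, and
       monomials with exponents congruent modulo Zl are congruent modulo B.  So a p with
       B not dividing p reduces to q /= 0 with pairwise non-congruent monomials X^r; off
       the hyperplanes (r - r')^perp (not proportional to l, by coprimality) the values
       x^(gamma . r) are distinct powers of x, so p(gamma) = q(gamma) /= 0: p is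
       "generically non-zero" [not_dvd_imp_generically_nonzero].
   (3) Generically non-zero polynomials are closed under products.  With (1) this gives
       part (a) and the prime property of B; as B is neither a unit nor a zero divisor,
       it is irreducible [prime_nonzerodivisor_imp_irreducible]. *)

section \<open>Linear algebra over \<open>\<rat>\<^sup>n\<close>\<close>

interpretation Q: vector_space "qscale :: rat \<Rightarrow> ('v \<Rightarrow> rat) \<Rightarrow> _"
  by unfold_locales (auto simp: qscale_def fun_eq_iff algebra_simps)

lemma sum_fun_apply: "(\<Sum>x\<in>A. f x) i = (\<Sum>x\<in>A. f x i)"
  by (induct A rule: infinite_finite_induct) auto

definition unit_vec :: "'v \<Rightarrow> 'v \<Rightarrow> rat" where
  "unit_vec i = (\<lambda>j. if j = i then 1 else 0)"

lemma inj_unit_vec: "inj unit_vec"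
  by (auto simp: inj_def unit_vec_def fun_eq_iff split: if_splits)

lemma unit_vec_combination:
  fixes f :: "'v::finite \<Rightarrow> rat"
  shows "(\<Sum>j\<in>UNIV. qscale (f j) (unit_vec j)) = f"
proof
  fix i
  have "(\<Sum>j\<in>UNIV. qscale (f j) (unit_vec j)) i = (\<Sum>j\<in>UNIV. if i = j then f j else 0)"
    unfolding sum_fun_apply by (intro sum.cong) (auto simp: qscale_def unit_vec_def)
  then show "(\<Sum>j\<in>UNIV. qscale (f j) (unit_vec j)) i = f i" by simp
qed

lemma finite_dimensional_qvec:
  "finite_dimensional_vector_space qscale (range (unit_vec :: 'v::finite \<Rightarrow> _))"
proof unfold_locales
  show "Q.independent (range (unit_vec :: 'v \<Rightarrow> _))"
  proof (rule Q.independent_if_scalars_zero)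
    fix f :: "('v \<Rightarrow> rat) \<Rightarrow> rat" and x :: "'v \<Rightarrow> rat"
    assume zero: "(\<Sum>x\<in>range unit_vec. qscale (f x) x) = 0" and x: "x \<in> range unit_vec"
    then obtain i where i: "x = unit_vec i" by auto
    have "(\<lambda>j. f (unit_vec j)) = (\<Sum>j\<in>UNIV. qscale (f (unit_vec j)) (unit_vec j))"
      by (rule unit_vec_combination[of "\<lambda>j. f (unit_vec j)", symmetric])
    also have "\<dots> = (\<Sum>x\<in>range unit_vec. qscale (f x) x)"
      by (simp add: sum.reindex[OF inj_unit_vec])
    finally have "(\<lambda>j. f (unit_vec j)) = 0" using zero by simp
    then show "f x = 0" unfolding i by (simp add: fun_eq_iff)
  qed simp
  show "Q.span (range (unit_vec :: 'v \<Rightarrow> _)) = UNIV"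
  proof -
    have "f \<in> Q.span (range unit_vec)" for f :: "'v \<Rightarrow> rat"
      by (subst unit_vec_combination[symmetric])
        (intro Q.span_sum Q.span_scale Q.span_base, auto)
    then show ?thesis by auto
  qed
qed simp

lemma dim_qvec: "Q.dim (UNIV :: ('v::finite \<Rightarrow> rat) set) = card (UNIV :: 'v set)"
proof -
  interpret F: finite_dimensional_vector_space "qscale :: rat \<Rightarrow> ('v \<Rightarrow> rat) \<Rightarrow> _" "range unit_vec"
    by (rule finite_dimensional_qvec)
  show ?thesis using card_image[OF inj_unit_vec] by simp
qed

definition zdot :: "('v::finite \<Rightarrow> int) \<Rightarrow> ('v \<Rightarrow> int) \<Rightarrow> int" where
  "zdot d \<gamma> = (\<Sum>i\<in>UNIV. d i * \<gamma> i)"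

definition qdot :: "('v::finite \<Rightarrow> int) \<Rightarrow> ('v \<Rightarrow> rat) \<Rightarrow> rat" where
  "qdot d v = (\<Sum>i\<in>UNIV. of_int (d i) * v i)"

lemma qdot_add: "qdot d (x + y) = qdot d x + qdot d y"
  by (simp add: qdot_def algebra_simps sum.distrib)

lemma qdot_zero: "qdot d 0 = 0"
  by (simp add: qdot_def)

lemma qdot_diff: "qdot d (x - y) = qdot d x - qdot d y"
  by (simp add: qdot_def algebra_simps sum_subtractf)

lemma qdot_scale: "qdot d (qscale c x) = c * qdot d x"
  by (simp add: qdot_def qscale_def sum_distrib_left algebra_simps)

lemma qdot_of_int: "qdot d (\<lambda>i. of_int (g i)) = of_int (zdot d g)"
  by (simp add: qdot_def zdot_def)

lemma subspace_kernel: "Q.subspace {v. qdot d v = 0}"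
  by (auto simp: Q.subspace_def qdot_add qdot_scale qdot_zero)

lemma dim_hyperplane_section:
  fixes S :: "('v::finite \<Rightarrow> rat) set"
  assumes S: "Q.subspace S" and m: "m \<in> S" "qdot d m \<noteq> 0"
  shows "Q.dim (S \<inter> {v. qdot d v = 0}) + 1 = Q.dim S"
proof -
  interpret F: finite_dimensional_vector_space "qscale :: rat \<Rightarrow> ('v \<Rightarrow> rat) \<Rightarrow> _" "range unit_vec"
    by (rule finite_dimensional_qvec)
  let ?T = "S \<inter> {v. qdot d v = 0}"
  have T: "Q.subspace ?T" using S subspace_kernel Q.subspace_inter by blast
  obtain B where B: "B \<subseteq> ?T" "Q.independent B" "?T \<subseteq> Q.span B" "card B = Q.dim ?T"
    using Q.basis_exists by blast
  have m_notin: "m \<notin> Q.span B" using Q.span_minimal[OF B(1) T] m by auto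
  have extended_basis_spans: "S \<subseteq> Q.span (insert m B)"
  proof
    fix s assume s: "s \<in> S"
    let ?k = "qdot d s / qdot d m"
    have "s - qscale ?k m \<in> ?T"
      using s m S by (auto simp: qdot_diff qdot_scale Q.subspace_diff Q.subspace_scale)
    then show "s \<in> Q.span (insert m B)" using B(3) Q.span_breakdown_eq by blast
  qed
  have "insert m B \<subseteq> S" using B(1) m by auto
  then have "Q.dim S = card (insert m B)"
    using Q.dim_unique[OF _ extended_basis_spans Q.independent_insertI[OF m_notin B(2)]] by blast
  moreover have "m \<notin> B" using m_notin Q.span_base by blast
  then have "card (insert m B) = card B + 1"
    using F.finiteI_independent[OF B(2)] by simp
  ultimately show ?thesis using B(4) by simp
qed

definition proportional :: "('v \<Rightarrow> int) \<Rightarrow> ('v \<Rightarrow> int) \<Rightarrow> bool" where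
  "proportional l d \<longleftrightarrow> (\<exists>c::rat. \<forall>i. of_int (d i) = c * of_int (l i))"

lemma proportional_imp_int_multiple:
  assumes "coprime_coeffs l" and "proportional l d"
  shows "\<exists>k::int. \<forall>i. d i = k * l i"
proof -
  obtain c :: rat where d: "\<forall>i. of_int (d i) = c * of_int (l i)"
    using assms(2) by (auto simp: proportional_def)
  obtain a b where q: "quotient_of c = (a, b)" by (cases "quotient_of c") auto
  have b_pos: "b > 0" and c: "c = of_int a / of_int b" and coprime: "coprime a b"
    using q quotient_of_denom_pos quotient_of_div quotient_of_coprime by blast+
  have cross: "d i * b = a * l i" for i
  proof -
    have "of_int (d i) * of_int b = (of_int a * of_int (l i) :: rat)"
      using d b_pos by (simp add: c field_simps)
    then show ?thesis by (metis of_int_eq_iff of_int_mult)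
  qed
  have "b dvd l i" for i
    using cross[of i] coprime by (metis coprime_commute coprime_dvd_mult_right_iff dvd_triv_right)
  then have "b dvd Gcd (range l)" by (intro Gcd_greatest) auto
  then have "b = 1" using assms(1) b_pos by (simp add: coprime_coeffs_def)
  then show ?thesis using cross by auto
qed

text \<open>An \<open>(n-1)\<close>-dimensional subspace of \<open>l\<^sup>\<bottom>\<close> is all of \<open>l\<^sup>\<bottom>\<close>, so a functional \<open>d\<close>
  vanishing on it is a multiple of \<open>l\<close>.  The proof avoids identifying the subspace:
  if \<open>d\<close> vanished on \<open>S\<close> but \<open>d \<notin> \<rat>l\<close>, then a basis of \<open>S\<close> together with \<open>l\<close> and \<open>d\<close>
  would be \<open>n + 1\<close> independent vectors (for \<open>w = d - kl \<in> S\<close> we get \<open>w \<cdot> w = 0\<close>).\<close>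
lemma nonproportional_functional_nonvanishing:
  fixes S :: "('v::finite \<Rightarrow> rat) set" and l d :: "'v \<Rightarrow> int"
  assumes S: "Q.subspace S" "S \<subseteq> {v. qdot l v = 0}" "Q.dim S = card (UNIV::'v set) - 1"
    and l: "l \<noteq> 0" and d: "\<not> proportional l d"
  shows "\<exists>m\<in>S. qdot d m \<noteq> 0"
proof (rule ccontr)
  assume "\<not> ?thesis"
  hence d_vanishes: "\<forall>m\<in>S. qdot d m = 0" by auto
  interpret F: finite_dimensional_vector_space "qscale :: rat \<Rightarrow> ('v \<Rightarrow> rat) \<Rightarrow> _" "range unit_vec"
    by (rule finite_dimensional_qvec)
  obtain B where B: "B \<subseteq> S" "Q.independent B" "S \<subseteq> Q.span B" "card B = Q.dim S"
    using Q.basis_exists by blast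
  have span_B: "Q.span B \<subseteq> S" using B(1) S(1) Q.span_minimal by blast
  define L where "L = (\<lambda>i. of_int (l i) :: rat)"
  define D where "D = (\<lambda>i. of_int (d i) :: rat)"
  obtain i0 where i0: "l i0 \<noteq> 0" using l by (auto simp: fun_eq_iff)
  have "qdot l L > 0"
    unfolding qdot_def L_def
    by (rule sum_pos2[where i=i0]) (use i0 in \<open>auto simp: zero_less_mult_iff\<close>)
  hence L_new: "L \<notin> Q.span B" using span_B S(2) by auto
  have D_new: "D \<notin> Q.span (insert L B)"
  proof
    assume "D \<in> Q.span (insert L B)"
    then obtain k where "D - qscale k L \<in> Q.span B" using Q.span_breakdown_eq by blast
    define w where "w = D - qscale k L"
    have "w \<in> S" using \<open>D - qscale k L \<in> Q.span B\<close> span_B by (auto simp: w_def)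
    then have "qdot l w = 0" "qdot d w = 0" using d_vanishes S(2) by auto
    moreover have "(\<Sum>i\<in>UNIV. w i * w i) = qdot d w - k * qdot l w"
      by (simp add: w_def qdot_def D_def L_def qscale_def sum_subtractf sum_distrib_left
          sum.distrib algebra_simps)
    ultimately have "(\<Sum>i\<in>UNIV. w i * w i) = 0" by simp
    then have "\<forall>i\<in>UNIV. w i * w i = 0" by (subst (asm) sum_nonneg_eq_0_iff) auto
    hence "\<forall>i. of_int (d i) = k * of_int (l i)" by (auto simp: w_def D_def L_def qscale_def)
    thus False using d by (auto simp: proportional_def)
  qed
  have "L \<notin> B" "D \<notin> insert L B" using L_new D_new Q.span_base by blast+
  then have "card (insert D (insert L B)) = card B + 2"
    using F.finiteI_independent[OF B(2)] by simp
  moreover have "card (insert D (insert L B)) \<le> Q.dim (UNIV :: ('v \<Rightarrow> rat) set)"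
    using F.independent_card_le_dim[OF _ Q.independent_insertI[OF D_new
          Q.independent_insertI[OF L_new B(2)]]] by blast
  moreover have "card (UNIV::'v set) > 0" by (simp add: card_gt_0_iff)
  ultimately show False using B(4) S(3) dim_qvec[where 'v='v] by simp
qed

text \<open>The rank hypothesis is used only through this avoidance property: \<open>N\<close> is not
  contained in finitely many hyperplanes \<open>d\<^sup>\<bottom>\<close> with \<open>d\<close> not proportional to \<open>l\<close>,
  because each of them meets \<open>N\<rat>\<close> in a subspace of dimension \<open>n - 2\<close>.\<close>
lemma rank_avoidance:
  fixes l :: "'v::finite \<Rightarrow> int" and N :: "('v \<Rightarrow> int) set"
  assumes l: "l \<noteq> 0" and N: "N \<subseteq> null_lattice l"
    and rank: "has_rank (rat_vecs N) (card (UNIV :: 'v set) - 1)"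
    and D: "finite D" "\<forall>d\<in>D. \<not> proportional l d"
  shows "\<exists>\<gamma>\<in>N. \<forall>d\<in>D. zdot d \<gamma> \<noteq> 0"
proof -
  define M where "M = rat_vecs N"
  define S where "S = Q.span M"
  let ?n = "card (UNIV :: 'v set)"
  have dim_S: "Q.dim S = ?n - 1" and not_covered: "\<not> (\<exists>F. finite F \<and>
      (\<forall>U\<in>F. Q.subspace U \<and> U \<subseteq> S \<and> int (Q.dim U) = int (?n - 1) - 1) \<and> M \<subseteq> \<Union>F)"
    using rank unfolding has_rank_def qdim_def qspan_def qsubspace_def S_def M_def by auto
  have S_subspace: "Q.subspace S" unfolding S_def by simp
  have M_perp: "M \<subseteq> {v. qdot l v = 0}"
    using N by (auto simp: M_def rat_vecs_def qdot_of_int null_lattice_def zdot_def)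
  have S_perp: "S \<subseteq> {v. qdot l v = 0}"
    unfolding S_def by (rule Q.span_minimal[OF M_perp subspace_kernel])
  define U where "U d = S \<inter> {v. qdot d v = 0}" for d
  have U: "Q.subspace (U d) \<and> U d \<subseteq> S \<and> int (Q.dim (U d)) = int (?n - 1) - 1" if "d \<in> D" for d
  proof -
    have "\<not> proportional l d" using D(2) that by blast
    then obtain m where "m \<in> S" "qdot d m \<noteq> 0"
      using nonproportional_functional_nonvanishing[OF S_subspace S_perp dim_S l] by blast
    then have "Q.dim (U d) + 1 = Q.dim S"
      unfolding U_def by (rule dim_hyperplane_section[OF S_subspace])
    moreover have "Q.subspace (U d)"
      unfolding U_def using S_subspace subspace_kernel by (rule Q.subspace_inter)
    ultimately show ?thesis using dim_S by (simp add: U_def)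
  qed
  have "\<not> M \<subseteq> \<Union>(U ` D)"
    using not_covered D(1) U by blast
  then obtain m where m: "m \<in> M" "\<forall>d\<in>D. m \<notin> U d" by blast
  then obtain \<gamma> where \<gamma>: "\<gamma> \<in> N" "m = (\<lambda>i. of_int (\<gamma> i))" by (auto simp: M_def rat_vecs_def)
  have "m \<in> S" using m(1) Q.span_superset S_def by blast
  then have "qdot d m \<noteq> 0" if "d \<in> D" for d
    using m(2) that by (auto simp: U_def)
  then have "zdot d \<gamma> \<noteq> 0" if "d \<in> D" for d
    using that by (simp add: \<gamma>(2) qdot_of_int)
  then show ?thesis using \<gamma>(1) by blast
qed

section \<open>Evaluation at \<open>\<gamma>\<close> as a ring homomorphism\<close>

definition exp_vec :: "('v \<Rightarrow>\<^sub>0 nat) \<Rightarrow> 'v \<Rightarrow> int" where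
  "exp_vec a = (\<lambda>i. int (Poly_Mapping.lookup a i))"

definition mono_eval :: "('v::finite \<Rightarrow> int) \<Rightarrow> ('v \<Rightarrow>\<^sub>0 nat) \<Rightarrow> ratfun" where
  "mono_eval \<gamma> a = xvar powi (zdot \<gamma> (exp_vec a))"

lemma xvar_eq_to_fract: "xvar = to_fract [:0, 1:]"
  by (simp add: xvar_def to_fract_def)

lemma xvar_nonzero: "xvar \<noteq> 0"
  by (simp add: xvar_eq_to_fract)

lemma prod_xvar_powi: "finite A \<Longrightarrow> (\<Prod>i\<in>A. xvar powi (f i)) = xvar powi (\<Sum>i\<in>A. f i)"
  by (induct A rule: finite_induct) (auto simp: power_int_add xvar_nonzero)

lemma mono_eval_add: "mono_eval \<gamma> (a + b) = mono_eval \<gamma> a * mono_eval \<gamma> b"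
  by (simp add: mono_eval_def zdot_def exp_vec_def lookup_add algebra_simps sum.distrib
      power_int_add xvar_nonzero)

lemma eval_at_superset:
  assumes "finite S" "Poly_Mapping.keys p \<subseteq> S"
  shows "eval_at \<gamma> p = (\<Sum>a\<in>S. of_int (Poly_Mapping.lookup p a) * mono_eval \<gamma> a)"
proof -
  have "eval_at \<gamma> p = (\<Sum>a\<in>Poly_Mapping.keys p. of_int (Poly_Mapping.lookup p a) * mono_eval \<gamma> a)"
    unfolding eval_at_def mono_eval_def zdot_def exp_vec_def
    by (intro sum.cong refl) (simp add: prod_xvar_powi)
  also have "\<dots> = (\<Sum>a\<in>S. of_int (Poly_Mapping.lookup p a) * mono_eval \<gamma> a)"
    using assms by (intro sum.mono_neutral_left) (auto simp: in_keys_iff)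
  finally show ?thesis .
qed

lemma eval_at_zero: "eval_at \<gamma> 0 = 0"
  by (simp add: eval_at_def)

lemma eval_at_add: "eval_at \<gamma> (p + q) = eval_at \<gamma> p + eval_at \<gamma> q"
  using keys_add[of p q]
  by (simp add: eval_at_superset[of "Poly_Mapping.keys p \<union> Poly_Mapping.keys q"] lookup_add
      sum.distrib algebra_simps)

lemma eval_at_minus: "eval_at \<gamma> (- p) = - eval_at \<gamma> p"
  by (simp add: eval_at_superset[of "Poly_Mapping.keys p"] sum_negf)

lemma eval_at_diff: "eval_at \<gamma> (p - q) = eval_at \<gamma> p - eval_at \<gamma> q"
  using eval_at_add[of \<gamma> p "- q"] by (simp add: eval_at_minus)

lemma eval_at_single: "eval_at \<gamma> (Poly_Mapping.single a c) = of_int c * mono_eval \<gamma> a"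
  by (subst eval_at_superset[of "{a}"]) auto

lemma eval_at_sum: "eval_at \<gamma> (\<Sum>i\<in>I. f i) = (\<Sum>i\<in>I. eval_at \<gamma> (f i))"
  by (induct I rule: infinite_finite_induct) (simp_all add: eval_at_zero eval_at_add)

lemma intpoly_expansion:
  "p = (\<Sum>a\<in>Poly_Mapping.keys p. Poly_Mapping.single a (Poly_Mapping.lookup p a))"
  by (rule poly_mapping_eqI)
    (simp add: lookup_sum lookup_single when_def in_keys_iff sum.delta'[unfolded eq_commute[of _ "_::'a"]])

lemma eval_at_mult: "eval_at \<gamma> (p * q) = eval_at \<gamma> p * eval_at \<gamma> q"
proof -
  have "p * q = (\<Sum>a\<in>Poly_Mapping.keys p. \<Sum>b\<in>Poly_Mapping.keys q.
      Poly_Mapping.single (a + b) (Poly_Mapping.lookup p a * Poly_Mapping.lookup q b))"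
    by (subst intpoly_expansion[of p], subst intpoly_expansion[of q])
      (simp add: sum_product mult_single)
  then show ?thesis
    by (simp add: eval_at_sum eval_at_single mono_eval_add eval_at_superset[of "Poly_Mapping.keys p" p]
        eval_at_superset[of "Poly_Mapping.keys q" q] sum_product algebra_simps)
qed

lemma eval_at_one: "eval_at \<gamma> 1 = 1"
  using eval_at_single[of \<gamma> 0 1] by (simp add: mono_eval_def zdot_def exp_vec_def)

lemma eval_at_binom:
  assumes "\<gamma> \<in> null_lattice l"
  shows "eval_at \<gamma> (binom_poly l) = 0"
proof -
  have "zdot \<gamma> (exp_vec (pos_part l)) - zdot \<gamma> (exp_vec (neg_part l)) = zdot l \<gamma>"
    by (simp add: zdot_def exp_vec_def pos_part_def neg_part_def sum_subtractf[symmetric]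
        algebra_simps) (intro sum.cong refl, simp add: algebra_simps nat_def)
  then show ?thesis
    using assms by (simp add: binom_poly_def eval_at_diff mono_X_def eval_at_single mono_eval_def
        null_lattice_def zdot_def)
qed

section \<open>Divisibility by the binomial\<close>

definition exp_cong :: "('v \<Rightarrow> int) \<Rightarrow> ('v \<Rightarrow>\<^sub>0 nat) \<Rightarrow> ('v \<Rightarrow>\<^sub>0 nat) \<Rightarrow> bool" where
  "exp_cong l a b \<longleftrightarrow> (\<exists>k::int. \<forall>i. exp_vec b i = exp_vec a i + k * l i)"

lemma exp_cong_refl: "exp_cong l a a"
  unfolding exp_cong_def by (rule exI[of _ 0]) simp

lemma exp_cong_sym: "exp_cong l a b \<Longrightarrow> exp_cong l b a"
  unfolding exp_cong_def by (metis add_diff_cancel_right' diff_conv_add_uminus mult_minus_left)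

lemma exp_cong_trans: "exp_cong l a b \<Longrightarrow> exp_cong l b c \<Longrightarrow> exp_cong l a c"
  unfolding exp_cong_def by (metis (no_types, opaque_lifting) add.assoc distrib_right)

lemma mono_X_add: "mono_X (a + b) = mono_X a * mono_X b"
  by (simp add: mono_X_def mult_single)

lemma mono_X_sum_power: "mono_X (\<Sum>_<k. a) = mono_X a ^ k"
  by (induct k) (simp_all add: mono_X_add, simp add: mono_X_def)

lemma nat_step_split:
  fixes a b k :: nat and m :: int
  assumes "int b = int a + int k * m"
  shows "k * nat (- m) \<le> a" "b = a - k * nat (- m) + k * nat m"
proof -
  have "int (k * nat (- m)) \<le> int a" "int b = int a - int (k * nat (- m)) + int (k * nat m)"
    using assms by (cases "0 \<le> m"; simp)+
  then show "k * nat (- m) \<le> a" "b = a - k * nat (- m) + k * nat m" by linarith+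
qed

lemma exp_step_split:
  fixes l :: "'v::finite \<Rightarrow> int"
  assumes "\<forall>i. exp_vec b i = exp_vec a i + int k * l i"
  obtains e where "a = e + (\<Sum>_<k. neg_part l)" "b = e + (\<Sum>_<k. pos_part l)"
proof -
  define e where "e = Abs_poly_mapping (\<lambda>i. Poly_Mapping.lookup a i - k * nat (- l i))"
  have "Poly_Mapping.lookup e i = Poly_Mapping.lookup a i - k * nat (- l i)" for i
    by (simp add: e_def)
  with nat_step_split[of "Poly_Mapping.lookup b i" "Poly_Mapping.lookup a i" k "l i" for i]
  show ?thesis using assms
    by (intro that[of e]; simp add: poly_mapping_eq_iff fun_eq_iff lookup_add lookup_sum
        exp_vec_def pos_part_def neg_part_def)
qed

text \<open>Monomials with congruent exponents agree modulo the binomial: with the splitting above,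
  \<open>X\<^sup>a - X\<^sup>b = -X\<^sup>e ((X\<^bsup>\<lambda>\<^sup>+\<^esup>)\<^sup>k - (X\<^bsup>\<lambda>\<^sup>-\<^esup>)\<^sup>k)\<close>.\<close>
lemma binom_dvd_mono_diff:
  fixes l :: "'v::finite \<Rightarrow> int"
  assumes "exp_cong l a b"
  shows "binom_poly l dvd mono_X a - mono_X b"
proof -
  have step: "binom_poly l dvd mono_X a - mono_X b"
    if shift: "\<forall>i. exp_vec b i = exp_vec a i + int k * l i" for a b k
  proof -
    obtain e where e: "a = e + (\<Sum>_<k. neg_part l)" "b = e + (\<Sum>_<k. pos_part l)"
      using exp_step_split[OF shift] by blast
    let ?u = "mono_X (pos_part l)" and ?v = "mono_X (neg_part l)"
    have "mono_X a - mono_X b = - (mono_X e * (?u ^ k - ?v ^ k))"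
      by (simp add: e mono_X_add mono_X_sum_power algebra_simps)
    moreover have "binom_poly l dvd ?u ^ k - ?v ^ k"
      unfolding binom_poly_def power_diff_sumr2 by simp
    ultimately show ?thesis by simp
  qed
  obtain k where k: "\<forall>i. exp_vec b i = exp_vec a i + k * l i"
    using assms exp_cong_def by blast
  show ?thesis
  proof (cases "0 \<le> k")
    case True
    then show ?thesis using step[where a=a and b=b and k="nat k"] k by simp
  next
    case False
    then have "binom_poly l dvd mono_X b - mono_X a"
      using step[where a=b and b=a and k="nat (- k)"] k by (simp add: algebra_simps)
    then show ?thesis by (metis dvd_minus_iff minus_diff_eq)
  qed
qed

lemma lookup_mono_X_mult:
  "Poly_Mapping.lookup (mono_X a * q) x
    = (\<Sum>k\<in>Poly_Mapping.keys q. if a + k = x then Poly_Mapping.lookup q k else (0::int))"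
proof -
  have "mono_X a * q = (\<Sum>k\<in>Poly_Mapping.keys q. Poly_Mapping.single (a + k) (Poly_Mapping.lookup q k))"
    by (subst intpoly_expansion[of q]) (simp add: mono_X_def sum_distrib_left mult_single)
  then show ?thesis by (simp add: lookup_sum lookup_single when_def)
qed

text \<open>Multiplication by monomials differing in the degree of some \<open>X\<^sub>i\<close> gives different
  results unless \<open>q = 0\<close>: compare the coefficients at the monomial of \<open>X\<^sup>b q\<close> of largest
  degree in \<open>X\<^sub>i\<close>.\<close>
lemma mono_X_mult_cancel:
  fixes q :: "'v intpoly"
  assumes less: "Poly_Mapping.lookup a i < Poly_Mapping.lookup b i"
    and eq: "mono_X a * q = mono_X b * q"
  shows "q = 0"
proof (rule ccontr)
  assume "q \<noteq> 0"
  define m where "m = Max ((\<lambda>t. Poly_Mapping.lookup t i) ` Poly_Mapping.keys q)"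
  have "m \<in> (\<lambda>t. Poly_Mapping.lookup t i) ` Poly_Mapping.keys q"
    unfolding m_def using \<open>q \<noteq> 0\<close> by (intro Max_in) auto
  then obtain s where s: "s \<in> Poly_Mapping.keys q" "Poly_Mapping.lookup s i = m" by auto
  have "a + k \<noteq> b + s" if "k \<in> Poly_Mapping.keys q" for k
  proof
    assume "a + k = b + s"
    then have "Poly_Mapping.lookup (a + k) i = Poly_Mapping.lookup (b + s) i" by simp
    then have "Poly_Mapping.lookup k i > m" using less s(2) unfolding lookup_add by linarith
    moreover have "Poly_Mapping.lookup k i \<le> m" unfolding m_def using that by simp
    ultimately show False by simp
  qed
  then have "Poly_Mapping.lookup (mono_X a * q) (b + s) = 0"
    unfolding lookup_mono_X_mult by (intro sum.neutral) auto
  moreover have "Poly_Mapping.lookup (mono_X b * q) (b + s) = Poly_Mapping.lookup q s"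
    unfolding lookup_mono_X_mult add_left_cancel using s(1) by simp
  ultimately show False using eq s(1) by (simp add: in_keys_iff)
qed

text \<open>The binomial is not a zero divisor.  (The monoid ring over \<open>'v \<Rightarrow>\<^sub>0 nat\<close> has no
  \<open>idom\<close> instance for an unordered \<open>'v\<close>, so this is shown directly.)\<close>
lemma binom_mult_eq_0_iff:
  assumes "l \<noteq> 0"
  shows "binom_poly (l::'v::finite \<Rightarrow> int) * q = 0 \<longleftrightarrow> q = 0"
proof
  assume zero: "binom_poly l * q = 0"
  obtain i where "l i \<noteq> 0" using assms by (auto simp: fun_eq_iff)
  then consider "Poly_Mapping.lookup (pos_part l) i < Poly_Mapping.lookup (neg_part l) i"
    | "Poly_Mapping.lookup (neg_part l) i < Poly_Mapping.lookup (pos_part l) i"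
    by (cases "0 < l i") (auto simp: pos_part_def neg_part_def)
  moreover have eq: "mono_X (pos_part l) * q = mono_X (neg_part l) * q"
    using zero by (simp add: binom_poly_def left_diff_distrib)
  ultimately show "q = 0"
    by cases (use mono_X_mult_cancel[OF _ eq] mono_X_mult_cancel[OF _ eq[symmetric]] in auto)
qed simp

section \<open>Linear independence of distinct powers of \<open>x\<close>\<close>

lemma to_fract_of_int: "to_fract (of_int c) = (of_int c :: 'a::idom fract)"
  by (induct c rule: int_induct[where k=0]) simp_all

lemma to_fract_power: "to_fract (p ^ k) = to_fract p ^ k"
  by (induct k) simp_all

lemma to_fract_monom: "to_fract (monom (of_int c :: rat) k) = of_int c * xvar ^ k"
proof -
  have "monom (of_int c :: rat) k = of_int c * monom 1 k"
    by (simp add: of_int_monom mult_monom)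
  then show ?thesis
    by (simp add: xvar_eq_to_fract to_fract_power to_fract_of_int monom_altdef)
qed

text \<open>Distinct integer powers of \<open>x\<close> are linearly independent over \<open>\<int>\<close> in \<open>\<rat>(x)\<close>: after
  multiplying by a large power of \<open>x\<close> the sum becomes a polynomial whose coefficient
  at the exponent of \<open>r\<^sub>0\<close> is \<open>c r\<^sub>0\<close>.\<close>
lemma xvar_powers_independent:
  assumes R: "finite R" and inj: "inj_on e R"
    and zero: "(\<Sum>r\<in>R. of_int (c r) * xvar powi (e r)) = 0" and r0: "r0 \<in> R"
  shows "c r0 = 0"
proof -
  define s where "s = (\<Sum>r\<in>R. nat \<bar>e r\<bar>)"
  have shifted_nonneg: "0 \<le> e r + int s" if "r \<in> R" for r
  proof -
    have "nat \<bar>e r\<bar> \<le> s" unfolding s_def using R that by (intro member_le_sum) auto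
    then show ?thesis by linarith
  qed
  define n where "n r = nat (e r + int s)" for r
  have n_inj: "r = r0" if "r \<in> R" "n r = n r0" for r
    using that shifted_nonneg[of r] shifted_nonneg[OF r0] inj_onD[OF inj _ that(1) r0]
    unfolding n_def by (simp add: nat_eq_iff2)
  have shift: "xvar powi (e r) * xvar ^ s = xvar ^ n r" if "r \<in> R" for r
  proof -
    have "xvar powi (e r) * xvar ^ s = xvar powi (e r + int s)"
      by (simp add: power_int_add xvar_nonzero)
    then show ?thesis using shifted_nonneg[OF that] by (simp add: n_def power_int_def)
  qed
  have "to_fract (\<Sum>r\<in>R. monom (of_int (c r) :: rat) (n r)) = (\<Sum>r\<in>R. of_int (c r) * xvar ^ n r)"
    by (simp add: to_fract_monom)
  also have "\<dots> = (\<Sum>r\<in>R. of_int (c r) * xvar powi (e r)) * xvar ^ s"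
    by (simp add: sum_distrib_right mult.assoc shift)
  also have "\<dots> = 0" by (simp add: zero)
  finally have "(\<Sum>r\<in>R. monom (of_int (c r) :: rat) (n r)) = 0" by (simp only: to_fract_eq_0_iff)
  then have "coeff (\<Sum>r\<in>R. monom (of_int (c r) :: rat) (n r)) (n r0) = 0" by simp
  moreover have "coeff (\<Sum>r\<in>R. monom (of_int (c r) :: rat) (n r)) (n r0) = of_int (c r0)"
  proof -
    have "coeff (\<Sum>r\<in>R. monom (of_int (c r) :: rat) (n r)) (n r0)
        = (\<Sum>r\<in>R. if r = r0 then of_int (c r) else 0)"
      unfolding coeff_sum by (intro sum.cong refl) (auto simp: coeff_monom dest: n_inj)
    then show ?thesis using R r0 by simp
  qed
  ultimately show ?thesis by simp
qed

lemma eval_at_nonzero_if_separating: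
  assumes "q \<noteq> 0" and inj: "inj_on (\<lambda>r. zdot \<gamma> (exp_vec r)) (Poly_Mapping.keys q)"
  shows "eval_at \<gamma> q \<noteq> 0"
proof
  assume "eval_at \<gamma> q = 0"
  then have "(\<Sum>r\<in>Poly_Mapping.keys q.
      of_int (Poly_Mapping.lookup q r) * xvar powi (zdot \<gamma> (exp_vec r))) = 0"
    by (simp add: eval_at_superset[of "Poly_Mapping.keys q" q] mono_eval_def)
  then have "Poly_Mapping.lookup q r = 0" if "r \<in> Poly_Mapping.keys q" for r
    using xvar_powers_independent[OF _ inj _ that] by simp
  then show False using \<open>q \<noteq> 0\<close> by (auto simp: in_keys_iff poly_mapping_eq_iff fun_eq_iff)
qed

section \<open>Reduction modulo the binomial\<close>

text \<open>Replacing each monomial of \<open>p\<close> by a chosen representative of its congruence class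
  modulo \<open>\<int>\<lambda>\<close> changes \<open>p\<close> by a multiple of the binomial and produces a polynomial whose
  monomials are pairwise non-congruent.\<close>
lemma binom_normal_form:
  fixes l :: "'v::finite \<Rightarrow> int" and p :: "'v intpoly"
  obtains q where "binom_poly l dvd p - q"
    and "\<And>r r'. r \<in> Poly_Mapping.keys q \<Longrightarrow> r' \<in> Poly_Mapping.keys q \<Longrightarrow> exp_cong l r r' \<Longrightarrow> r = r'"
proof -
  define K where "K = Poly_Mapping.keys p"
  define rep where "rep a = (SOME b. b \<in> K \<and> exp_cong l a b)" for a
  have rep_in: "rep a \<in> K \<and> exp_cong l a (rep a)" if "a \<in> K" for a
    unfolding rep_def by (rule someI[of _ a]) (use that exp_cong_refl in auto)
  have rep_eq: "rep a = rep a'" if "exp_cong l a a'" for a a'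
  proof -
    have "(\<lambda>b. b \<in> K \<and> exp_cong l a b) = (\<lambda>b. b \<in> K \<and> exp_cong l a' b)"
      using that exp_cong_sym exp_cong_trans by blast
    then show ?thesis unfolding rep_def by simp
  qed
  define q where "q = (\<Sum>a\<in>K. Poly_Mapping.single (rep a) (Poly_Mapping.lookup p a))"
  have "p - q = (\<Sum>a\<in>K. Poly_Mapping.single a (Poly_Mapping.lookup p a)
      - Poly_Mapping.single (rep a) (Poly_Mapping.lookup p a))"
    unfolding q_def K_def sum_subtractf by (subst intpoly_expansion[of p]) (rule refl)
  also have "\<dots> = (\<Sum>a\<in>K. Poly_Mapping.single 0 (Poly_Mapping.lookup p a) * (mono_X a - mono_X (rep a)))"
    by (simp add: mono_X_def right_diff_distrib mult_single)
  finally have "binom_poly l dvd p - q"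
    by (simp only:) (intro dvd_sum dvd_mult binom_dvd_mono_diff, use rep_in in blast)
  moreover have "r = r'" if "r \<in> Poly_Mapping.keys q" "r' \<in> Poly_Mapping.keys q" "exp_cong l r r'" for r r'
  proof -
    have keys_q: "Poly_Mapping.keys q \<subseteq> rep ` K"
      unfolding q_def by (rule order_trans[OF keys_sum]) auto
    have "rep t = t" if t: "t \<in> Poly_Mapping.keys q" for t
    proof -
      obtain a where "a \<in> K" "t = rep a" using t keys_q by blast
      then show ?thesis using rep_eq[of a "rep a"] rep_in by simp
    qed
    then show ?thesis using rep_eq[OF that(3)] that(1,2) by simp
  qed
  ultimately show ?thesis using that by blast
qed

section \<open>Generic non-vanishing\<close>

definition generically_nonzero :: "('v::finite \<Rightarrow> int) \<Rightarrow> 'v intpoly \<Rightarrow> bool" where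
  "generically_nonzero l p \<longleftrightarrow> (\<exists>D. finite D \<and> (\<forall>d\<in>D. \<not> proportional l d) \<and>
     (\<forall>\<gamma>\<in>null_lattice l. (\<forall>d\<in>D. zdot d \<gamma> \<noteq> 0) \<longrightarrow> eval_at \<gamma> p \<noteq> 0))"

lemma generically_nonzero_one: "generically_nonzero l 1"
  unfolding generically_nonzero_def by (rule exI[of _ "{}"]) (simp add: eval_at_one)

lemma generically_nonzero_mult:
  assumes "generically_nonzero l f" "generically_nonzero l g"
  shows "generically_nonzero l (f * g)"
proof -
  obtain Df Dg where "finite Df" "\<forall>d\<in>Df. \<not> proportional l d"
      "\<forall>\<gamma>\<in>null_lattice l. (\<forall>d\<in>Df. zdot d \<gamma> \<noteq> 0) \<longrightarrow> eval_at \<gamma> f \<noteq> 0"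
    and "finite Dg" "\<forall>d\<in>Dg. \<not> proportional l d"
      "\<forall>\<gamma>\<in>null_lattice l. (\<forall>d\<in>Dg. zdot d \<gamma> \<noteq> 0) \<longrightarrow> eval_at \<gamma> g \<noteq> 0"
    using assms unfolding generically_nonzero_def by blast
  then show ?thesis
    unfolding generically_nonzero_def by (intro exI[of _ "Df \<union> Dg"]) (auto simp: eval_at_mult)
qed

text \<open>Reduce it to \<open>q\<close> with pairwise non-congruent monomials \<open>X\<^sup>r\<close>; at \<open>\<gamma> \<in> \<N>(\<lambda>)\<close>
  avoiding the hyperplanes \<open>(r - r')\<^sup>\<bottom>\<close> the values \<open>x\<^bsup>\<gamma>\<cdot>r\<^esup>\<close> are distinct powers of \<open>x\<close>,
  hence independent (\<open>eval_at_nonzero_if_separating\<close>).  Coprimality makes \<open>r - r'\<close> non-proportional to \<open>\<lambda>\<close>.\<close>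
lemma not_dvd_imp_generically_nonzero:
  fixes l :: "'v::finite \<Rightarrow> int"
  assumes coprime: "coprime_coeffs l" and not_dvd: "\<not> binom_poly l dvd p"
  shows "generically_nonzero l p"
proof -
  obtain q where dvd: "binom_poly l dvd p - q"
    and separated: "\<And>r r'. r \<in> Poly_Mapping.keys q \<Longrightarrow> r' \<in> Poly_Mapping.keys q \<Longrightarrow>
        exp_cong l r r' \<Longrightarrow> r = r'"
    using binom_normal_form by blast
  define R where "R = Poly_Mapping.keys q"
  have "q \<noteq> 0" using dvd not_dvd by auto
  define D where "D = (\<lambda>(r, r'). exp_vec r - exp_vec r') ` {(r, r'). r \<in> R \<and> r' \<in> R \<and> r \<noteq> r'}"
  have "finite D"
    unfolding D_def by (rule finite_imageI, rule finite_subset[of _ "R \<times> R"]) (auto simp: R_def)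
  moreover have "\<not> proportional l d" if d: "d \<in> D" for d
  proof
    assume "proportional l d"
    then obtain k where k: "\<forall>i. d i = k * l i"
      using proportional_imp_int_multiple[OF coprime] by blast
    obtain r r' where rr: "r \<in> R" "r' \<in> R" "r \<noteq> r'" and "d = exp_vec r - exp_vec r'"
      using d by (auto simp: D_def)
    then have "exp_cong l r' r"
      unfolding exp_cong_def using k by (intro exI[of _ k]) (simp add: fun_eq_iff)
    then show False using separated rr by (auto simp: R_def)
  qed
  moreover have "eval_at \<gamma> p \<noteq> 0"
    if \<gamma>: "\<gamma> \<in> null_lattice l" and avoids: "\<forall>d\<in>D. zdot d \<gamma> \<noteq> 0" for \<gamma>
  proof -
    obtain h where "p - q = binom_poly l * h" using dvd by blast
    then have "eval_at \<gamma> (p - q) = 0" by (simp add: eval_at_mult eval_at_binom[OF \<gamma>])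
    then have "eval_at \<gamma> p = eval_at \<gamma> q" by (simp add: eval_at_diff)
    moreover have "inj_on (\<lambda>r. zdot \<gamma> (exp_vec r)) R"
    proof (rule inj_onI, rule ccontr)
      fix r r' assume "r \<in> R" "r' \<in> R" "zdot \<gamma> (exp_vec r) = zdot \<gamma> (exp_vec r')" "r \<noteq> r'"
      moreover have "zdot (exp_vec r - exp_vec r') \<gamma> = zdot \<gamma> (exp_vec r) - zdot \<gamma> (exp_vec r')"
        by (simp add: zdot_def sum_subtractf[symmetric] algebra_simps)
      ultimately show False using avoids by (auto simp: D_def)
    qed
    ultimately show ?thesis
      using eval_at_nonzero_if_separating[OF \<open>q \<noteq> 0\<close>] by (simp add: R_def)
  qed
  ultimately show ?thesis unfolding generically_nonzero_def by blast
qed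

lemma generically_nonzero_witness:
  fixes l :: "'v::finite \<Rightarrow> int" and N :: "('v \<Rightarrow> int) set"
  assumes "l \<noteq> 0" "N \<subseteq> null_lattice l" "has_rank (rat_vecs N) (card (UNIV :: 'v set) - 1)"
    and "generically_nonzero l p"
  shows "\<exists>\<gamma>\<in>N. eval_at \<gamma> p \<noteq> 0"
proof -
  obtain D where D: "finite D" "\<forall>d\<in>D. \<not> proportional l d"
    "\<forall>\<gamma>\<in>null_lattice l. (\<forall>d\<in>D. zdot d \<gamma> \<noteq> 0) \<longrightarrow> eval_at \<gamma> p \<noteq> 0"
    using assms(4) unfolding generically_nonzero_def by blast
  obtain \<gamma> where "\<gamma> \<in> N" "\<forall>d\<in>D. zdot d \<gamma> \<noteq> 0"
    using rank_avoidance[OF assms(1-3) D(1,2)] by blast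
  then show ?thesis using D(3) assms(2) by blast
qed

section \<open>Irreducibility\<close>

lemma prime_nonzerodivisor_imp_irreducible:
  fixes p :: "'a::comm_ring_1"
  assumes not_unit: "\<not> p dvd 1"
    and cancel: "\<And>q. p * q = 0 \<Longrightarrow> q = 0"
    and prime: "\<And>f g. p dvd f * g \<Longrightarrow> p dvd f \<or> p dvd g"
  shows "irreducible p"
proof (rule irreducibleI)
  show "p \<noteq> 0" using cancel[of 1] by auto
  show "\<not> p dvd 1" by (fact not_unit)
next
  fix f g assume fg: "p = f * g"
  have unit_cofactor: "y dvd 1" if "p dvd x" "p = x * y" for x y
  proof -
    obtain h where "x = p * h" using \<open>p dvd x\<close> by blast
    then have "p * (1 - h * y) = p - x * y" by (simp add: algebra_simps)
    then have "p * (1 - h * y) = 0" using \<open>p = x * y\<close> by simp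
    then have "1 - h * y = 0" by (rule cancel)
    then have "1 = y * h" by (simp add: algebra_simps)
    then show ?thesis by (rule dvdI)
  qed
  from prime[of f g] fg show "f dvd 1 \<or> g dvd 1"
    using unit_cofactor[of f g] unit_cofactor[of g f] by (auto simp: mult.commute)
qed

theorem lemma3p8:
  fixes l :: "'v::finite \<Rightarrow> int" and N :: "('v \<Rightarrow> int) set"
  assumes "l \<noteq> 0"
    and "coprime_coeffs l"
    and "N \<subseteq> null_lattice l"
    and "has_rank (rat_vecs N) (card (UNIV :: 'v set) - 1)"
  shows "(\<forall>p :: 'v intpoly. (\<forall>\<gamma>\<in>N. eval_at \<gamma> p = 0) \<longleftrightarrow> binom_poly l dvd p)
         \<and> irreducible (binom_poly l)"
proof -
  note witness = generically_nonzero_witness[OF assms(1,3,4)]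
  have dvd_iff: "(\<forall>\<gamma>\<in>N. eval_at \<gamma> p = 0) \<longleftrightarrow> binom_poly l dvd p" for p :: "'v intpoly"
  proof
    assume "\<forall>\<gamma>\<in>N. eval_at \<gamma> p = 0"
    then show "binom_poly l dvd p"
      using witness not_dvd_imp_generically_nonzero[OF assms(2)] by blast
  next
    assume "binom_poly l dvd p"
    then show "\<forall>\<gamma>\<in>N. eval_at \<gamma> p = 0"
      using assms(3) by (auto simp: eval_at_mult eval_at_binom elim!: dvdE)
  qed
  have "irreducible (binom_poly l)"
  proof (rule prime_nonzerodivisor_imp_irreducible)
    show "\<not> binom_poly l dvd 1"
      using witness[OF generically_nonzero_one] dvd_iff by blast
    show "q = 0" if "binom_poly l * q = 0" for q
      using that binom_mult_eq_0_iff[OF assms(1)] by blast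
    show "binom_poly l dvd f \<or> binom_poly l dvd g" if "binom_poly l dvd f * g" for f g
      using that witness[OF generically_nonzero_mult] not_dvd_imp_generically_nonzero[OF assms(2)]
        dvd_iff by blast
  qed
  with dvd_iff show ?thesis by blast
qed

end
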